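(* Let $\beta,\gamma\in\mathbb{C}$ with $\gamma\neq1$ and $\beta\neq\gamma$, let $c\in\mathbb{C}\setminus\{0\}$, and for index $n$ consider the discrete system for $(x_n,y_n)$ \[ (x_{n+1}+y_n)(x_n+y_n)=\frac{\gamma-1}{c^2}\,y_n(y_n-c)\Big(y_n-c\frac{\gamma-\beta}{\gamma-1}\Big),\quad (x_n+y_{n-1})(x_n+y_n)=\frac{x_n(x_n+c)}{x_n-\frac{cn}{\gamma-1}}\Big(x_n+c\frac{\gamma-\beta}{\gamma-1}\Big), \] together with the differential system in $c$ \[ \begin{aligned} \frac{dx}{dc}&=\frac{(n+1)x+ny}{c}-\frac{\gamma-1}{c^2}x(x+y)+\frac{x(x+c)\big(c(\gamma-\beta)+(\gamma-1)x\big)}{c^2(x+y)},\\ \frac{dy}{dc}&=-x+\frac{y}{c}+y\Big(-1+\frac{(\beta-1)(y-c)}{c(x+y)}+\frac{(\gamma-1)(y-c)^2}{c^2(x+y)}\Big). \end{aligned} \] Define the birational change of variables and parameter identification \[ q=\frac{(\gamma-1)y(y-c)}{c^2(x+y)},\qquad p=\frac{c(x+c)}{y-c}+\frac{c^2(\gamma+n+1-\beta)(x+y)}{c^2x+y\big(c(\gamma+c-1)-(\gamma-1)y\big)},\qquad t=c, \] \[ a_0=n+1,\quad a_1=\gamma-1,\quad a_2=2-\beta,\quad a_3=-\gamma-n. \] Then this change of variables simultaneously transforms the discrete system into the discrete Painlev\'e equation \[ q_{n+1}=\frac{p_n+t}{t}\Big(1-\frac{a_0+a_1}{a_0+(p_n+t)q_n}\Big),\qquad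 p_{n+1}=\frac{1}{1-q_{n+1}}\Big(a_2+\frac{(a_0+a_1)p_n}{t+p_n-t\,q_{n+1}}\Big), \] with parameter evolution $n\mapsto n+1$ given by $(a_0,a_1,a_2,a_3)\mapsto(a_0+1,a_1,a_2,a_3-1)$ (the $a_i$ in the equations being those at index $n$), and transforms the differential system into the Hamiltonian system \[ \frac{dq}{dt}=\frac{1}{t}\Big(q(q-1)(2p+t)-a_1(q-1)-a_3q\Big),\qquad \frac{dp}{dt}=\frac{1}{t}\Big(p(p+t)(1-2q)+(a_1+a_3)p-a_2t\Big). \]
   Context: The discrete system arises from the recurrence coefficients of polynomials orthogonal with respect to the generalised Meixner weight $\frac{(\gamma)_kc^k}{(\beta)_kk!}$ on $\mathbb{Z}_{\ge0}$. The Hamiltonian system is a Hamiltonian form of the fifth Painlev\'e equation, with $a_0+a_1+a_2+a_3=1$. *)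

theory Defs
  imports "HOL-Analysis.Analysis"
begin

definition qv :: "complex \<Rightarrow> complex \<Rightarrow> complex \<Rightarrow> complex \<Rightarrow> complex" where
  "qv \<gamma> c x y = (\<gamma> - 1) * y * (y - c) / (c\<^sup>2 * (x + y))"

definition pv :: "complex \<Rightarrow> complex \<Rightarrow> nat \<Rightarrow> complex \<Rightarrow> complex \<Rightarrow> complex \<Rightarrow> complex" where
  "pv \<beta> \<gamma> n c x y =
     c * (x + c) / (y - c)
     + c\<^sup>2 * (\<gamma> + of_nat n + 1 - \<beta>) * (x + y)
       / (c\<^sup>2 * x + y * (c * (\<gamma> + c - 1) - (\<gamma> - 1) * y))"

text \<open>Parameter identification at index n (a3 chosen so that a0+a1+a2+a3 = 1).\<close>

definition a0 :: "nat \<Rightarrow> complex" where "a0 n = of_nat n + 1"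
definition a1 :: "complex \<Rightarrow> complex" where "a1 \<gamma> = \<gamma> - 1"
definition a2 :: "complex \<Rightarrow> complex" where "a2 \<beta> = 2 - \<beta>"
definition a3 :: "complex \<Rightarrow> complex \<Rightarrow> nat \<Rightarrow> complex" where
  "a3 \<beta> \<gamma> n = \<beta> - \<gamma> - of_nat n - 1"

end

(*
  Write k = gamma - 1, r = gamma - beta and L = gamma + n + 1 - beta.  The change of variables
  satisfies  c^2 (x + y) q = k y (y - c)  and  p = c (x + c) / (y - c) + L / (1 - q).

  Discrete system: put P = p + c, A = a0 + P q and E = A - P.  The first equation solves to
  x_{n+1} = c q E / k, and then the second one to y_{n+1} = c E (k - q P) / (k A).  Substituting
  into the definitions gives q_{n+1} = P (q P - k) / (c A) and c + p - c q_{n+1} = P (a0 + k) / A,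
  from which both equations of the discrete Painleve system follow.

  Differential system: the chain rule for q gives the Hamiltonian equation for q once denominators
  are cleared modulo the relation defining q.  For p, write p = z + L / (1 - q) with
  z = c (x + c) / (y - c), so that p' = z' + L q' / (1 - q)^2.  The derivative z' is a quadratic in z
  with coefficients in q, and in the Hamiltonian p-equation minus L q' / (1 - q)^2 all powers of
  1 / (1 - q) cancel, leaving the same quadratic.
*)
theory Submission
  imports Defs
begin

lemma qv_mult_eq:
  assumes "c \<noteq> 0" and "x + y \<noteq> 0"
  shows "c\<^sup>2 * (x + y) * qv \<gamma> c x y = (\<gamma> - 1) * y * (y - c)"
  using assms by (simp add: qv_def)

lemma pv_denominator_eq:
  assumes "c \<noteq> 0" and "x + y \<noteq> 0"
  shows "c\<^sup>2 * x + y * (c * (\<gamma> + c - 1) - (\<gamma> - 1) * y) = c\<^sup>2 * (x + y) * (1 - qv \<gamma> c x y)"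
proof -
  have "c\<^sup>2 * (x + y) * (1 - qv \<gamma> c x y) = c\<^sup>2 * (x + y) - (\<gamma> - 1) * y * (y - c)"
    using qv_mult_eq[OF assms] by (simp add: algebra_simps)
  then show ?thesis by (simp add: algebra_simps power2_eq_square)
qed

lemma pv_eq:
  assumes "c \<noteq> 0" and "x + y \<noteq> 0"
  shows "pv \<beta> \<gamma> n c x y = c * (x + c) / (y - c) + (\<gamma> + of_nat n + 1 - \<beta>) / (1 - qv \<gamma> c x y)"
  using assms unfolding pv_def pv_denominator_eq[OF assms] by simp

lemma first_equation_solved:
  fixes c k m r x y x' q p :: complex
  assumes c: "c \<noteq> 0" and k: "k \<noteq> 0" and S: "x + y \<noteq> 0" and Y: "y \<noteq> c" and q: "q \<noteq> 1"
    and hq: "c\<^sup>2 * (x + y) * q = k * y * (y - c)"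
    and hp: "p = c * (x + c) / (y - c) + (m + r) / (1 - q)"
    and H1: "(x' + y) * (x + y) = k / c\<^sup>2 * y * (y - c) * (y - c * r / k)"
  shows "(1 - q) * (x' + y) = - q * (x' + c * r / k)"
    and "x' = c * q * (m - (1 - q) * (p + c)) / k"
proof -
  have "k / c\<^sup>2 * y * (y - c) = q * (x + y)" using hq c by (simp add: field_simps)
  then have "(x' + y) * (x + y) = q * (y - c * r / k) * (x + y)" using H1 by (simp add: ac_simps)
  then have x'_plus_y: "x' + y = q * (y - c * r / k)" using S by simp
  then show "(1 - q) * (x' + y) = - q * (x' + c * r / k)" by algebra
  have Yc: "y - c \<noteq> 0" using Y by simp
  have "(1 - q) * (p + c) = (1 - q) * c * (x + y) / (y - c) + m + r"
    using hp q Yc by (simp add: field_simps)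
  moreover have "q * c * (x + y) / (y - c) = k * y / c" using hq c Yc by (simp add: field_simps power2_eq_square)
  ultimately show "x' = c * q * (m - (1 - q) * (p + c)) / k"
    using x'_plus_y c k Yc by (simp add: field_simps) algebra
qed

lemma second_equation_solved:
  fixes c k m r x' y y' q p :: complex
  assumes c: "c \<noteq> 0" and k: "k \<noteq> 0" and q: "q \<noteq> 1" and hA: "m + (p + c) * q \<noteq> 0"
    and x': "x' = c * q * (m - (1 - q) * (p + c)) / k"
    and rel: "(1 - q) * (x' + y) = - q * (x' + c * r / k)"
    and U: "x' + y \<noteq> 0"
    and H2: "(x' + y) * (x' + y') = x' * (x' + c) / (x' - c * m / k) * (x' + c * r / k)"
  shows "y' = c * (m - (1 - q) * (p + c)) * (k - q * (p + c)) / (k * (m + (p + c) * q))"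
proof -
  have q0: "q \<noteq> 0" using rel U q by auto
  define P where "P = p + c"
  define E where "E = m - (1 - q) * P"
  define A where "A = m + P * q"
  have EAP: "E = A - P" unfolding A_def E_def by (simp add: algebra_simps)
  have A0: "A \<noteq> 0" using hA by (simp add: A_def P_def)
  have "x' - c * m / k = c * (q - 1) * A / k"
    unfolding x' A_def P_def using k by (simp add: field_simps)
  moreover have "x' + c * r / k = - (1 - q) * (x' + y) / q" using rel q0 by (simp add: field_simps)
  ultimately have "(x' + y) * (x' + y') = x' * (x' + c) / (c * (q - 1) * A / k) * (- (1 - q) * (x' + y) / q)"
    using H2 by simp
  also have "\<dots> = (x' + y) * (x' * (x' + c) * k / (c * q * A))"
    using c k q q0 A0 by (simp add: field_simps)
  finally have "x' + y' = x' * (x' + c) * k / (c * q * A)" using U by (metis mult_left_cancel)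
  then have "y' = x' * (x' + c) * k / (c * q * A) - x'" by (simp add: algebra_simps)
  moreover have "x' * (x' + c) * k / (c * q * A) - x' = c * E * (k - q * P) / (k * A)"
    unfolding x' E_def[symmetric] P_def[symmetric] EAP using c k q0 A0 by (simp add: field_simps)
  ultimately show ?thesis unfolding E_def P_def A_def by simp
qed

lemma qp_succ_eq:
  fixes c k m r x' y' q p q' p' :: complex
  assumes c: "c \<noteq> 0" and k: "k \<noteq> 0" and hA: "m + (p + c) * q \<noteq> 0"
    and x': "x' = c * q * (m - (1 - q) * (p + c)) / k"
    and y': "y' = c * (m - (1 - q) * (p + c)) * (k - q * (p + c)) / (k * (m + (p + c) * q))"
    and S': "x' + y' \<noteq> 0" and Y': "y' \<noteq> c" and q': "q' \<noteq> 1" and hB: "c + p - c * q' \<noteq> 0"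
    and hq': "c\<^sup>2 * (x' + y') * q' = k * y' * (y' - c)"
    and hp': "p' = c * (x' + c) / (y' - c) + (m + 1 + r) / (1 - q')"
  shows "q' = (p + c) / c * (1 - (m + k) / (m + (p + c) * q))"
    and "p' = 1 / (1 - q') * ((1 - k + r) + (m + k) * p / (c + p - c * q'))"
proof -
  define P where "P = p + c"
  define A where "A = m + P * q"
  define E where "E = A - P"
  define G where "G = q * E + k"
  have EA: "m - (1 - q) * P = E" unfolding E_def A_def by (simp add: algebra_simps)
  have A0: "A \<noteq> 0" using hA by (simp add: A_def P_def)
  have x'_eq: "x' = c * q * E / k" unfolding x' P_def[symmetric] EA ..
  have y'_eq: "y' = c * E * (k - q * P) / (k * A)" unfolding y' P_def[symmetric] EA A_def[symmetric] ..
  have x'_plus_c: "x' + c = c * G / k" unfolding x'_eq G_def using k by (simp add: field_simps)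
  have sum': "x' + y' = c * G * E / (k * A)"
    unfolding x'_eq y'_eq using c k A0 by (simp add: field_simps G_def E_def)
  have y'_minus_c: "y' - c = - c * P * G / (k * A)"
    unfolding y'_eq using c k A0 by (simp add: field_simps G_def E_def)
  have "G \<noteq> 0" "E \<noteq> 0" using S' sum' by auto
  have "P \<noteq> 0" using Y' y'_minus_c by auto
  have "q' = k * y' * (y' - c) / (c\<^sup>2 * (x' + y'))"
    using hq' S' c by (metis nonzero_mult_div_cancel_left mult_eq_0_iff power_eq_0_iff)
  also have "\<dots> = P * (q * P - k) / (c * A)"
    unfolding y'_minus_c sum' unfolding y'_eq using c k A0 \<open>G \<noteq> 0\<close> \<open>E \<noteq> 0\<close>
    by (simp add: field_simps power2_eq_square)
  finally have q'_eq: "q' = P * (q * P - k) / (c * A)" .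
  then show "q' = (p + c) / c * (1 - (m + k) / (m + (p + c) * q))"
    using c A0 by (simp add: field_simps A_def P_def)
  have mA: "m = A - P * q" unfolding A_def by simp
  have PB: "c + p - c * q' = P * (m + k) / A"
    unfolding q'_eq mA using c A0 by (simp add: field_simps P_def)
  then have "m + k \<noteq> 0" using hB by auto
  have "1 / (1 - q') * ((1 - k + r) + (m + k) * p / (c + p - c * q'))
      = 1 / (1 - q') * ((1 - k + r) + p * A / P)"
    unfolding PB using \<open>m + k \<noteq> 0\<close> by (simp add: divide_divide_eq_right ac_simps)
  also have "\<dots> = 1 / (1 - q') * ((m + 1 + r) - c * A * (1 - q') / P)"
  proof -
    have "p * A / P + c * A * (1 - q') / P = A * (c + p - c * q') / P"
      by (simp add: add_divide_distrib[symmetric] algebra_simps)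
    also have "\<dots> = m + k" unfolding PB using A0 \<open>P \<noteq> 0\<close> by simp
    finally have "(1 - k + r) + p * A / P = (m + 1 + r) - c * A * (1 - q') / P"
      by (simp add: algebra_simps)
    then show ?thesis by simp
  qed
  also have "\<dots> = c * (x' + c) / (y' - c) + (m + 1 + r) / (1 - q')"
    unfolding x'_plus_c y'_minus_c using c k A0 q' \<open>G \<noteq> 0\<close> \<open>P \<noteq> 0\<close> by (simp add: field_simps)
  finally show "p' = 1 / (1 - q') * ((1 - k + r) + (m + k) * p / (c + p - c * q'))"
    unfolding hp' ..
qed

lemma discrete_system_imp_dP:
  fixes \<beta> \<gamma> c x y x' y' :: complex and n :: nat
  defines "q \<equiv> qv \<gamma> c x y" and "p \<equiv> pv \<beta> \<gamma> n c x y"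
    and "q' \<equiv> qv \<gamma> c x' y'" and "p' \<equiv> pv \<beta> \<gamma> (Suc n) c x' y'"
  assumes \<gamma>: "\<gamma> \<noteq> 1" and c: "c \<noteq> 0"
    and H1: "(x' + y) * (x + y) = (\<gamma> - 1) / c\<^sup>2 * y * (y - c) * (y - c * (\<gamma> - \<beta>) / (\<gamma> - 1))"
    and H2: "(x' + y) * (x' + y')
      = x' * (x' + c) / (x' - c * of_nat (Suc n) / (\<gamma> - 1)) * (x' + c * (\<gamma> - \<beta>) / (\<gamma> - 1))"
    and S: "x + y \<noteq> 0" and Y: "y \<noteq> c"
    and D: "c\<^sup>2 * x + y * (c * (\<gamma> + c - 1) - (\<gamma> - 1) * y) \<noteq> 0"
    and U: "x' + y \<noteq> 0" and S': "x' + y' \<noteq> 0" and Y': "y' \<noteq> c"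
    and hA: "a0 n + (p + c) * q \<noteq> 0" and hB: "c + p - c * q' \<noteq> 0" and q': "1 - q' \<noteq> 0"
  shows "q' = (p + c) / c * (1 - (a0 n + a1 \<gamma>) / (a0 n + (p + c) * q))"
    and "p' = 1 / (1 - q') * (a2 \<beta> + (a0 n + a1 \<gamma>) * p / (c + p - c * q'))"
proof -
  have k: "\<gamma> - 1 \<noteq> 0" using \<gamma> by simp
  have q: "q \<noteq> 1" using D unfolding pv_denominator_eq[OF c S] q_def by simp
  have hp: "p = c * (x + c) / (y - c) + (a0 n + (\<gamma> - \<beta>)) / (1 - q)"
    unfolding p_def q_def pv_eq[OF c S] by (simp add: a0_def algebra_simps)
  have hp': "p' = c * (x' + c) / (y' - c) + (a0 n + 1 + (\<gamma> - \<beta>)) / (1 - q')"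
    unfolding p'_def q'_def pv_eq[OF c S'] by (simp add: a0_def algebra_simps)
  have H2_a0: "(x' + y) * (x' + y')
      = x' * (x' + c) / (x' - c * a0 n / (\<gamma> - 1)) * (x' + c * (\<gamma> - \<beta>) / (\<gamma> - 1))"
    using H2 by (simp add: a0_def add.commute)
  have hq: "c\<^sup>2 * (x + y) * q = (\<gamma> - 1) * y * (y - c)"
    unfolding q_def by (rule qv_mult_eq[OF c S])
  have hq': "c\<^sup>2 * (x' + y') * q' = (\<gamma> - 1) * y' * (y' - c)"
    unfolding q'_def by (rule qv_mult_eq[OF c S'])
  have "q' \<noteq> 1" using q' by simp
  note first = first_equation_solved[OF c k S Y q hq hp H1]
  note y' = second_equation_solved[OF c k q hA first(2,1) U H2_a0]
  note succ = qp_succ_eq[OF c k hA first(2) y' S' Y' \<open>q' \<noteq> 1\<close> hB hq' hp']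
  show "q' = (p + c) / c * (1 - (a0 n + a1 \<gamma>) / (a0 n + (p + c) * q))"
    using succ(1) by (simp add: a1_def)
  show "p' = 1 / (1 - q') * (a2 \<beta> + (a0 n + a1 \<gamma>) * p / (c + p - c * q'))"
    using succ(2) by (simp add: a1_def a2_def algebra_simps)
qed

definition sys_x :: "complex \<Rightarrow> complex \<Rightarrow> nat \<Rightarrow> complex \<Rightarrow> complex \<Rightarrow> complex \<Rightarrow> complex" where
  "sys_x \<beta> \<gamma> n c x y =
     ((of_nat n + 1) * x + of_nat n * y) / c - (\<gamma> - 1) / c\<^sup>2 * x * (x + y)
     + x * (x + c) * (c * (\<gamma> - \<beta>) + (\<gamma> - 1) * x) / (c\<^sup>2 * (x + y))"

definition sys_y :: "complex \<Rightarrow> complex \<Rightarrow> complex \<Rightarrow> complex \<Rightarrow> complex \<Rightarrow> complex" where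
  "sys_y \<beta> \<gamma> c x y =
     - x + y / c + y * (- 1 + (\<beta> - 1) * (y - c) / (c * (x + y)) + (\<gamma> - 1) * (y - c)\<^sup>2 / (c\<^sup>2 * (x + y)))"

definition ham_q :: "complex \<Rightarrow> complex \<Rightarrow> nat \<Rightarrow> complex \<Rightarrow> complex \<Rightarrow> complex \<Rightarrow> complex" where
  "ham_q \<beta> \<gamma> n t q p = 1 / t * (q * (q - 1) * (2 * p + t) - a1 \<gamma> * (q - 1) - a3 \<beta> \<gamma> n * q)"

definition ham_p :: "complex \<Rightarrow> complex \<Rightarrow> nat \<Rightarrow> complex \<Rightarrow> complex \<Rightarrow> complex \<Rightarrow> complex" where
  "ham_p \<beta> \<gamma> n t q p = 1 / t * (p * (p + t) * (1 - 2 * q) + (a1 \<gamma> + a3 \<beta> \<gamma> n) * p - a2 \<beta> * t)"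

lemma qv_has_field_derivative:
  fixes x y :: "complex \<Rightarrow> complex"
  assumes "(x has_field_derivative dx) (at t)" and "(y has_field_derivative dy) (at t)"
    and "t \<noteq> 0" and "x t + y t \<noteq> 0"
  shows "((\<lambda>s. qv \<gamma> s (x s) (y s)) has_field_derivative
     (\<gamma> - 1) * ((dy * (y t - t) + y t * (dy - 1)) * (t\<^sup>2 * (x t + y t))
        - y t * (y t - t) * (2 * t * (x t + y t) + t\<^sup>2 * (dx + dy))) / (t\<^sup>2 * (x t + y t))\<^sup>2) (at t)"
  unfolding qv_def
  by (rule derivative_eq_intros assms refl | simp add: assms)+ (simp add: power2_eq_square algebra_simps)

lemma qv_rate_eq_ham_q:
  fixes \<beta> \<gamma> c x y :: complex and n :: nat
  assumes c: "c \<noteq> 0" and S: "x + y \<noteq> 0" and Y: "y \<noteq> c"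
    and D: "c\<^sup>2 * x + y * (c * (\<gamma> + c - 1) - (\<gamma> - 1) * y) \<noteq> 0"
  defines "dx \<equiv> sys_x \<beta> \<gamma> n c x y" and "dy \<equiv> sys_y \<beta> \<gamma> c x y"
  shows "(\<gamma> - 1) * ((dy * (y - c) + y * (dy - 1)) * (c\<^sup>2 * (x + y))
        - y * (y - c) * (2 * c * (x + y) + c\<^sup>2 * (dx + dy))) / (c\<^sup>2 * (x + y))\<^sup>2
     = ham_q \<beta> \<gamma> n c (qv \<gamma> c x y) (pv \<beta> \<gamma> n c x y)"
proof -
  \<comment> \<open>With x + y and y - c as variables, every denominator is a product of atoms for field_simps.\<close>
  obtain S Y where x: "x = S - Y - c" and y: "y = Y + c" and "S \<noteq> 0" and "Y \<noteq> 0"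
    using S Y by (metis add_diff_cancel_right' diff_add_cancel diff_diff_eq eq_iff_diff_eq_0)
  define q where "q = qv \<gamma> c x y"
  have hq: "c\<^sup>2 * (x + y) * q = (\<gamma> - 1) * y * (y - c)" unfolding q_def using c S by (rule qv_mult_eq)
  have "1 - q \<noteq> 0" using D unfolding pv_denominator_eq[OF c S] q_def by simp
  show ?thesis
    unfolding pv_eq[OF c S] q_def[symmetric] ham_q_def a1_def a3_def dx_def dy_def sys_x_def sys_y_def
    using hq \<open>S \<noteq> 0\<close> \<open>Y \<noteq> 0\<close> c \<open>1 - q \<noteq> 0\<close> unfolding x y
    apply (simp add: field_simps power2_eq_square)
    by algebra
qed

lemma qv_has_derivative_ham_q:
  fixes x y :: "complex \<Rightarrow> complex"
  assumes "(x has_field_derivative sys_x \<beta> \<gamma> n t (x t) (y t)) (at t)"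
    and "(y has_field_derivative sys_y \<beta> \<gamma> t (x t) (y t)) (at t)"
    and "t \<noteq> 0" and "x t + y t \<noteq> 0" and "y t \<noteq> t"
    and "t\<^sup>2 * x t + y t * (t * (\<gamma> + t - 1) - (\<gamma> - 1) * y t) \<noteq> 0"
  shows "((\<lambda>s. qv \<gamma> s (x s) (y s)) has_field_derivative
           ham_q \<beta> \<gamma> n t (qv \<gamma> t (x t) (y t)) (pv \<beta> \<gamma> n t (x t) (y t))) (at t)"
  using qv_has_field_derivative[OF assms(1-4), where \<gamma>=\<gamma>] qv_rate_eq_ham_q[OF assms(3-6), where \<beta>=\<beta> and n=n] by simp

lemma z_rate_eq:
  fixes \<beta> \<gamma> c x y :: complex and n :: nat
  assumes c: "c \<noteq> 0" and S: "x + y \<noteq> 0" and Y: "y \<noteq> c"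
  defines "dx \<equiv> sys_x \<beta> \<gamma> n c x y" and "dy \<equiv> sys_y \<beta> \<gamma> c x y"
    and "z \<equiv> c * (x + c) / (y - c)" and "q \<equiv> qv \<gamma> c x y"
  shows "((x + 2 * c + c * dx) * (y - c) - c * (x + c) * (dy - 1)) / (y - c)\<^sup>2
     = 1 / c * (z * (z + c) * (1 - 2 * q) + (2 * \<gamma> + of_nat n - \<beta>) * z + (of_nat n + \<gamma> - 1) * c)"
proof -
  obtain S Y where x: "x = S - Y - c" and y: "y = Y + c" and "S \<noteq> 0" and "Y \<noteq> 0"
    using S Y by (metis add_diff_cancel_right' diff_add_cancel diff_diff_eq eq_iff_diff_eq_0)
  have hq: "c\<^sup>2 * (x + y) * q = (\<gamma> - 1) * y * (y - c)" unfolding q_def using c S by (rule qv_mult_eq)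
  show ?thesis
    unfolding dx_def dy_def z_def sys_x_def sys_y_def
    using hq \<open>S \<noteq> 0\<close> \<open>Y \<noteq> 0\<close> c unfolding x y
    apply (simp add: field_simps power2_eq_square)
    by algebra
qed

lemma ham_p_sub_ham_q_eq:
  fixes \<beta> \<gamma> t q z :: complex and n :: nat
  assumes t: "t \<noteq> 0" and q: "q \<noteq> 1"
  defines "L \<equiv> \<gamma> + of_nat n + 1 - \<beta>"
  shows "ham_p \<beta> \<gamma> n t q (z + L / (1 - q)) - L * ham_q \<beta> \<gamma> n t q (z + L / (1 - q)) / (1 - q)\<^sup>2
     = 1 / t * (z * (z + t) * (1 - 2 * q) + (2 * \<gamma> + of_nat n - \<beta>) * z + (of_nat n + \<gamma> - 1) * t)"
proof -
  define w where "w = 1 - q"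
  have "w \<noteq> 0" and q: "q = 1 - w" using q by (simp_all add: w_def)
  show ?thesis
    unfolding ham_p_def ham_q_def a1_def a2_def a3_def L_def w_def[symmetric] using t \<open>w \<noteq> 0\<close>
    apply (simp add: field_simps power2_eq_square)
    using q by algebra
qed

lemma pv_has_derivative_ham_p:
  fixes x y :: "complex \<Rightarrow> complex"
  assumes "open S" and "t \<in> S" and nz: "\<And>s. s \<in> S \<Longrightarrow> s \<noteq> 0 \<and> x s + y s \<noteq> 0"
    and DX: "(x has_field_derivative sys_x \<beta> \<gamma> n t (x t) (y t)) (at t)"
    and DY: "(y has_field_derivative sys_y \<beta> \<gamma> t (x t) (y t)) (at t)"
    and Y: "y t \<noteq> t" and D: "t\<^sup>2 * x t + y t * (t * (\<gamma> + t - 1) - (\<gamma> - 1) * y t) \<noteq> 0"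
  shows "((\<lambda>s. pv \<beta> \<gamma> n s (x s) (y s)) has_field_derivative
           ham_p \<beta> \<gamma> n t (qv \<gamma> t (x t) (y t)) (pv \<beta> \<gamma> n t (x t) (y t))) (at t)"
proof -
  define L where "L = \<gamma> + of_nat n + 1 - \<beta>"
  define q where "q = qv \<gamma> t (x t) (y t)"
  define z where "z = t * (x t + t) / (y t - t)"
  have t: "t \<noteq> 0" and S: "x t + y t \<noteq> 0" using nz \<open>t \<in> S\<close> by auto
  have "q \<noteq> 1" using D unfolding pv_denominator_eq[OF t S] q_def by simp
  have p: "pv \<beta> \<gamma> n t (x t) (y t) = z + L / (1 - q)"
    unfolding pv_eq[OF t S] z_def L_def q_def ..
  define dz where "dz = ((x t + 2 * t + t * sys_x \<beta> \<gamma> n t (x t) (y t)) * (y t - t)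
      - t * (x t + t) * (sys_y \<beta> \<gamma> t (x t) (y t) - 1)) / (y t - t)\<^sup>2"
  define f where "f s = s * (x s + s) / (y s - s) + L / (1 - qv \<gamma> s (x s) (y s))" for s
  have "(f has_field_derivative dz + L * ham_q \<beta> \<gamma> n t q (z + L / (1 - q)) / (1 - q)\<^sup>2) (at t)"
    unfolding f_def
    using qv_has_derivative_ham_q[OF DX DY t S Y D, folded q_def, unfolded p] \<open>q \<noteq> 1\<close> Y
    by (auto intro!: derivative_eq_intros DX DY simp: dz_def q_def power2_eq_square field_simps)
  also have "dz + L * ham_q \<beta> \<gamma> n t q (z + L / (1 - q)) / (1 - q)\<^sup>2 = ham_p \<beta> \<gamma> n t q (z + L / (1 - q))"
    using z_rate_eq[OF t S Y, where \<beta>=\<beta> and \<gamma>=\<gamma> and n=n, folded q_def z_def dz_def]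
      ham_p_sub_ham_q_eq[OF t \<open>q \<noteq> 1\<close>, where \<beta>=\<beta> and \<gamma>=\<gamma> and n=n and z=z]
    unfolding L_def by (simp add: diff_eq_eq)
  finally show ?thesis
    unfolding p q_def
    by (rule has_field_derivative_transform_within_open[OF _ \<open>open S\<close> \<open>t \<in> S\<close>])
       (simp add: f_def pv_eq nz L_def)
qed

theorem proposition4p18:
  fixes \<beta> \<gamma> :: complex
  assumes h\<gamma>: "\<gamma> \<noteq> 1" and h\<beta>\<gamma>: "\<beta> \<noteq> \<gamma>"
  shows
   "(\<forall>(c::complex) (x::nat \<Rightarrow> complex) (y::nat \<Rightarrow> complex).
       c \<noteq> 0
     \<and> (\<forall>n. (x (Suc n) + y n) * (x n + y n)
              = (\<gamma> - 1) / c\<^sup>2 * y n * (y n - c) * (y n - c * (\<gamma> - \<beta>) / (\<gamma> - 1)))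
     \<and> (\<forall>n. (x (Suc n) + y n) * (x (Suc n) + y (Suc n))
              = x (Suc n) * (x (Suc n) + c) / (x (Suc n) - c * of_nat (Suc n) / (\<gamma> - 1))
                * (x (Suc n) + c * (\<gamma> - \<beta>) / (\<gamma> - 1)))
     \<and> (\<forall>n. x n + y n \<noteq> 0 \<and> y n \<noteq> c
            \<and> c\<^sup>2 * x n + y n * (c * (\<gamma> + c - 1) - (\<gamma> - 1) * y n) \<noteq> 0
            \<and> x (Suc n) + y n \<noteq> 0
            \<and> x (Suc n) \<noteq> c * of_nat (Suc n) / (\<gamma> - 1)
            \<and> a0 n + (pv \<beta> \<gamma> n c (x n) (y n) + c) * qv \<gamma> c (x n) (y n) \<noteq> 0
            \<and> c + pv \<beta> \<gamma> n c (x n) (y n) - c * qv \<gamma> c (x (Suc n)) (y (Suc n)) \<noteq> 0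
            \<and> 1 - qv \<gamma> c (x (Suc n)) (y (Suc n)) \<noteq> 0)
     \<longrightarrow> (\<forall>n.
           (let t = c; q = qv \<gamma> c (x n) (y n); p = pv \<beta> \<gamma> n c (x n) (y n);
                q' = qv \<gamma> c (x (Suc n)) (y (Suc n)); p' = pv \<beta> \<gamma> (Suc n) c (x (Suc n)) (y (Suc n))
            in q' = (p + t) / t * (1 - (a0 n + a1 \<gamma>) / (a0 n + (p + t) * q))
             \<and> p' = 1 / (1 - q') * (a2 \<beta> + (a0 n + a1 \<gamma>) * p / (t + p - t * q'))
             \<and> a0 (Suc n) = a0 n + 1
             \<and> a3 \<beta> \<gamma> (Suc n) = a3 \<beta> \<gamma> n - 1)))
  \<and> (\<forall>(n::nat) (S::complex set) (x::complex \<Rightarrow> complex) (y::complex \<Rightarrow> complex).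
       open S
     \<and> (\<forall>c\<in>S. c \<noteq> 0 \<and> x c + y c \<noteq> 0 \<and> y c \<noteq> c
              \<and> c\<^sup>2 * x c + y c * (c * (\<gamma> + c - 1) - (\<gamma> - 1) * y c) \<noteq> 0)
     \<and> (\<forall>c\<in>S.
          (x has_field_derivative
             ((of_nat n + 1) * x c + of_nat n * y c) / c
             - (\<gamma> - 1) / c\<^sup>2 * x c * (x c + y c)
             + x c * (x c + c) * (c * (\<gamma> - \<beta>) + (\<gamma> - 1) * x c) / (c\<^sup>2 * (x c + y c))) (at c)
        \<and> (y has_field_derivative
             - x c + y c / c
             + y c * (- 1 + (\<beta> - 1) * (y c - c) / (c * (x c + y c))
                      + (\<gamma> - 1) * (y c - c)\<^sup>2 / (c\<^sup>2 * (x c + y c)))) (at c))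
     \<longrightarrow> (\<forall>t\<in>S.
           (let q = qv \<gamma> t (x t) (y t); p = pv \<beta> \<gamma> n t (x t) (y t) in
              ((\<lambda>s. qv \<gamma> s (x s) (y s)) has_field_derivative
                 1 / t * (q * (q - 1) * (2 * p + t) - a1 \<gamma> * (q - 1) - a3 \<beta> \<gamma> n * q)) (at t)
            \<and> ((\<lambda>s. pv \<beta> \<gamma> n s (x s) (y s)) has_field_derivative
                 1 / t * (p * (p + t) * (1 - 2 * q) + (a1 \<gamma> + a3 \<beta> \<gamma> n) * p - a2 \<beta> * t)) (at t))))"
  apply (intro conjI allI impI ballI)
  subgoal premises H for c x y n
    unfolding Let_def using h\<gamma> H
    by (intro conjI discrete_system_imp_dP) (blast | simp add: a0_def a3_def)+
  subgoal premises H for n S x y t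
    using H qv_has_derivative_ham_q[of x \<beta> \<gamma> n t y] pv_has_derivative_ham_p[of S t x y \<beta> \<gamma> n]
    by (simp add: Let_def sys_x_def sys_y_def ham_q_def ham_p_def)
  done

end
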